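(* Let $D$ be a division ring, $A$ a finitely generated free abelian group and $D * A$ a crossed product. Let $N$ be a finitely generated critical $D * A$-module such that $\mathrm{gk}(N)\le \mathrm{gk}(L)$ for every nonzero finitely generated $D * A$-module $L$. Then $N$ is simple.
   Context: A crossed product $D * A$ of an abelian group $A$ over a division ring $D$ is a ring with a $D$-basis $\{\bar a: a\in A\}$ with $\bar a_1\bar a_2=\tau(a_1,a_2)\overline{a_1a_2}$ ($\tau(a_1,a_2)\in D\setminus\{0\}$) and $\bar a d=\sigma_a(d)\bar a$ for automorphisms $\sigma_a$ of $D$. $\mathrm{gk}$ denotes Gelfand–Kirillov dimension measured over $D$. A nonzero $D * A$-module $M$ is critical if for every nonzero proper submodule $N'$ of $M$ one has $\mathrm{gk}(M)>\mathrm{gk}(M/N')$. *)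

theory Defs
  imports Complex_Main "HOL-Algebra.Module" "HOL-Algebra.AbelCoset" "HOL-Algebra.Subrings"
    "HOL-Library.Extended_Real" "HOL-Library.Liminf_Limsup"
begin

(* The finitely generated free abelian group of rank n, realised as Z^n:
   integer vectors indexed by {0..<n} (entries outside are 0), group law = pointwise addition. *)
definition Zn :: "nat \<Rightarrow> (nat \<Rightarrow> int) set" where
  "Zn n = {a. \<forall>i\<ge>n. a i = 0}"

definition Zadd :: "(nat \<Rightarrow> int) \<Rightarrow> (nat \<Rightarrow> int) \<Rightarrow> (nat \<Rightarrow> int)" where
  "Zadd a b = (\<lambda>i. a i + b i)"

definition division_subring :: "('r, 'b) ring_scheme \<Rightarrow> 'r set \<Rightarrow> bool" where
  "division_subring R D \<longleftrightarrow> subring D R \<and> \<one>\<^bsub>R\<^esub> \<noteq> \<zero>\<^bsub>R\<^esub> \<and>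
     (\<forall>d\<in>D. d \<noteq> \<zero>\<^bsub>R\<^esub> \<longrightarrow> (\<exists>e\<in>D. d \<otimes>\<^bsub>R\<^esub> e = \<one>\<^bsub>R\<^esub> \<and> e \<otimes>\<^bsub>R\<^esub> d = \<one>\<^bsub>R\<^esub>))"

definition ring_aut_on :: "('r, 'b) ring_scheme \<Rightarrow> 'r set \<Rightarrow> ('r \<Rightarrow> 'r) \<Rightarrow> bool" where
  "ring_aut_on R D \<sigma> \<longleftrightarrow> bij_betw \<sigma> D D \<and> \<sigma> \<one>\<^bsub>R\<^esub> = \<one>\<^bsub>R\<^esub> \<and>
     (\<forall>x\<in>D. \<forall>y\<in>D. \<sigma> (x \<oplus>\<^bsub>R\<^esub> y) = \<sigma> x \<oplus>\<^bsub>R\<^esub> \<sigma> y \<and>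
                     \<sigma> (x \<otimes>\<^bsub>R\<^esub> y) = \<sigma> x \<otimes>\<^bsub>R\<^esub> \<sigma> y)"

(* R is a crossed product D * A of A = Z^n over the division ring D (a subring of R),
   with distinguished elements u a (= \bar a), a \<in> A, forming a left D-basis of R. *)
definition crossed_product ::
  "('r, 'b) ring_scheme \<Rightarrow> 'r set \<Rightarrow> nat \<Rightarrow> ((nat \<Rightarrow> int) \<Rightarrow> 'r) \<Rightarrow> bool" where
  "crossed_product R D n u \<longleftrightarrow>
     ring R \<and> division_subring R D \<and>
     (\<forall>a\<in>Zn n. u a \<in> carrier R) \<and>
     (\<forall>r\<in>carrier R. \<exists>!c. (\<forall>a. a \<notin> Zn n \<longrightarrow> c a = \<zero>\<^bsub>R\<^esub>) \<and> (\<forall>a\<in>Zn n. c a \<in> D) \<and>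
         finite {a\<in>Zn n. c a \<noteq> \<zero>\<^bsub>R\<^esub>} \<and>
         r = finsum R (\<lambda>a. c a \<otimes>\<^bsub>R\<^esub> u a) {a\<in>Zn n. c a \<noteq> \<zero>\<^bsub>R\<^esub>}) \<and>
     (\<forall>a\<in>Zn n. \<forall>b\<in>Zn n. \<exists>t\<in>D - {\<zero>\<^bsub>R\<^esub>}. u a \<otimes>\<^bsub>R\<^esub> u b = t \<otimes>\<^bsub>R\<^esub> u (Zadd a b)) \<and>
     (\<forall>a\<in>Zn n. \<exists>\<sigma>. ring_aut_on R D \<sigma> \<and> (\<forall>d\<in>D. u a \<otimes>\<^bsub>R\<^esub> d = \<sigma> d \<otimes>\<^bsub>R\<^esub> u a))"

(* unital left modules over a (not necessarily commutative) ring R *)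
definition lmodule :: "('r, 'b) ring_scheme \<Rightarrow> ('r, 'm, 'c) module_scheme \<Rightarrow> bool" where
  "lmodule R M \<longleftrightarrow> ring R \<and> abelian_group M \<and>
     (\<forall>a\<in>carrier R. \<forall>x\<in>carrier M. a \<odot>\<^bsub>M\<^esub> x \<in> carrier M) \<and>
     (\<forall>a\<in>carrier R. \<forall>b\<in>carrier R. \<forall>x\<in>carrier M.
        (a \<oplus>\<^bsub>R\<^esub> b) \<odot>\<^bsub>M\<^esub> x = a \<odot>\<^bsub>M\<^esub> x \<oplus>\<^bsub>M\<^esub> b \<odot>\<^bsub>M\<^esub> x) \<and>
     (\<forall>a\<in>carrier R. \<forall>x\<in>carrier M. \<forall>y\<in>carrier M.
        a \<odot>\<^bsub>M\<^esub> (x \<oplus>\<^bsub>M\<^esub> y) = a \<odot>\<^bsub>M\<^esub> x \<oplus>\<^bsub>M\<^esub> a \<odot>\<^bsub>M\<^esub> y) \<and>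
     (\<forall>a\<in>carrier R. \<forall>b\<in>carrier R. \<forall>x\<in>carrier M.
        (a \<otimes>\<^bsub>R\<^esub> b) \<odot>\<^bsub>M\<^esub> x = a \<odot>\<^bsub>M\<^esub> (b \<odot>\<^bsub>M\<^esub> x)) \<and>
     (\<forall>x\<in>carrier M. \<one>\<^bsub>R\<^esub> \<odot>\<^bsub>M\<^esub> x = x)"

definition lsubmodule :: "('r, 'b) ring_scheme \<Rightarrow> ('r, 'm, 'c) module_scheme \<Rightarrow> 'm set \<Rightarrow> bool" where
  "lsubmodule R M N \<longleftrightarrow> N \<subseteq> carrier M \<and> \<zero>\<^bsub>M\<^esub> \<in> N \<and>
     (\<forall>x\<in>N. \<forall>y\<in>N. x \<oplus>\<^bsub>M\<^esub> y \<in> N) \<and>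
     (\<forall>a\<in>carrier R. \<forall>x\<in>N. a \<odot>\<^bsub>M\<^esub> x \<in> N)"

definition lfin_gen :: "('r, 'b) ring_scheme \<Rightarrow> ('r, 'm, 'c) module_scheme \<Rightarrow> bool" where
  "lfin_gen R M \<longleftrightarrow> (\<exists>F. finite F \<and> F \<subseteq> carrier M \<and>
     carrier M = {finsum M (\<lambda>f. c f \<odot>\<^bsub>M\<^esub> f) F | c. c \<in> F \<rightarrow> carrier R})"

definition qmod :: "('r, 'm, 'c) module_scheme \<Rightarrow> 'm set \<Rightarrow> ('r, 'm set) module" where
  "qmod M N = \<lparr>carrier = a_rcosets\<^bsub>M\<^esub> N, mult = (\<lambda>X Y. undefined), one = undefined,
     zero = N, add = (\<lambda>X Y. X <+>\<^bsub>M\<^esub> Y),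
     smult = (\<lambda>r X. N <+>\<^bsub>M\<^esub> ((\<lambda>x. r \<odot>\<^bsub>M\<^esub> x) ` X))\<rparr>"

definition lsimple :: "('r, 'b) ring_scheme \<Rightarrow> ('r, 'm, 'c) module_scheme \<Rightarrow> bool" where
  "lsimple R M \<longleftrightarrow> carrier M \<noteq> {\<zero>\<^bsub>M\<^esub>} \<and>
     (\<forall>N. lsubmodule R M N \<longrightarrow> N = {\<zero>\<^bsub>M\<^esub>} \<or> N = carrier M)"

definition Dspan :: "('r, 'm, 'c) module_scheme \<Rightarrow> 'r set \<Rightarrow> 'm set \<Rightarrow> 'm set" where
  "Dspan M D G = {finsum M (\<lambda>g. c g \<odot>\<^bsub>M\<^esub> g) G | c. c \<in> G \<rightarrow> D}"

(* dim_D of the D-span of S = least size of a subset of S spanning S *)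
definition Ddim :: "('r, 'm, 'c) module_scheme \<Rightarrow> 'r set \<Rightarrow> 'm set \<Rightarrow> nat" where
  "Ddim M D S = (LEAST k. \<exists>G. finite G \<and> G \<subseteq> S \<and> card G = k \<and> S \<subseteq> Dspan M D G)"

definition Zball :: "nat \<Rightarrow> nat \<Rightarrow> (nat \<Rightarrow> int) set" where
  "Zball n k = {a \<in> Zn n. (\<Sum>i<n. \<bar>a i\<bar>) \<le> int k}"

(* V^k F, V = D-span of {\bar a : |a| <= 1} the standard frame *)
definition Vset :: "('r, 'm, 'c) module_scheme \<Rightarrow> nat \<Rightarrow> ((nat \<Rightarrow> int) \<Rightarrow> 'r) \<Rightarrow> nat \<Rightarrow> 'm set \<Rightarrow> 'm set" where
  "Vset M n u k F = {u a \<odot>\<^bsub>M\<^esub> f | a f. a \<in> Zball n k \<and> f \<in> F}"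

(* Gelfand-Kirillov dimension over D (supremum over finite subsets; equals the
   growth of any finite generating set for finitely generated modules; -\<infinity> for 0) *)
definition gk :: "'r set \<Rightarrow> nat \<Rightarrow> ((nat \<Rightarrow> int) \<Rightarrow> 'r) \<Rightarrow> ('r, 'm, 'c) module_scheme \<Rightarrow> ereal" where
  "gk D n u M = (SUP F \<in> {F. finite F \<and> F \<noteq> {} \<and> F \<subseteq> carrier M - {\<zero>\<^bsub>M\<^esub>}}.
      limsup (\<lambda>k. ereal (ln (real (Ddim M D (Vset M n u k F))) / ln (real k))))"

definition lcritical :: "('r, 'b) ring_scheme \<Rightarrow> 'r set \<Rightarrow> nat \<Rightarrow> ((nat \<Rightarrow> int) \<Rightarrow> 'r)
     \<Rightarrow> ('r, 'm, 'c) module_scheme \<Rightarrow> bool" where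
  "lcritical R D n u M \<longleftrightarrow> carrier M \<noteq> {\<zero>\<^bsub>M\<^esub>} \<and>
     (\<forall>N'. lsubmodule R M N' \<and> N' \<noteq> {\<zero>\<^bsub>M\<^esub>} \<and> N' \<noteq> carrier M \<longrightarrow>
        gk D n u (qmod M N') < gk D n u M)"

end

theory Submission
  imports Defs
begin

text \<open>If \<open>H\<close> were a nonzero proper submodule of \<open>N\<close>, criticality would give
  \<open>gk(N/H) < gk(N)\<close>, while \<open>N/H\<close> is finitely generated and nonzero, contradicting the
  minimality of \<open>gk(N)\<close>. The minimality hypothesis only quantifies over modules whose
  carrier is of type \<open>'r list\<close>, so \<open>N/H\<close> is first transported to such a module:
  choosing coefficient vectors with respect to a finite generating set embeds any finitely
  generated module into \<open>'r list\<close>, and GK dimension, finite generation and nontriviality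
  are invariant under module isomorphisms.\<close>

locale left_module =
  fixes R :: "('r,'b) ring_scheme" and M :: "('r,'m,'c) module_scheme"
  assumes lmodule: "lmodule R M"
begin

sublocale R: ring R using lmodule by (simp add: lmodule_def)
sublocale M: abelian_group M using lmodule by (simp add: lmodule_def)

lemma smult_closed [intro, simp]: "a \<in> carrier R \<Longrightarrow> x \<in> carrier M \<Longrightarrow> a \<odot>\<^bsub>M\<^esub> x \<in> carrier M"
  using lmodule by (simp add: lmodule_def)

lemma smult_l_distr: "a \<in> carrier R \<Longrightarrow> b \<in> carrier R \<Longrightarrow> x \<in> carrier M \<Longrightarrow>
    (a \<oplus>\<^bsub>R\<^esub> b) \<odot>\<^bsub>M\<^esub> x = a \<odot>\<^bsub>M\<^esub> x \<oplus>\<^bsub>M\<^esub> b \<odot>\<^bsub>M\<^esub> x"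
  using lmodule by (simp add: lmodule_def)

lemma smult_r_distr: "a \<in> carrier R \<Longrightarrow> x \<in> carrier M \<Longrightarrow> y \<in> carrier M \<Longrightarrow>
    a \<odot>\<^bsub>M\<^esub> (x \<oplus>\<^bsub>M\<^esub> y) = a \<odot>\<^bsub>M\<^esub> x \<oplus>\<^bsub>M\<^esub> a \<odot>\<^bsub>M\<^esub> y"
  using lmodule by (simp add: lmodule_def)

lemma smult_assoc: "a \<in> carrier R \<Longrightarrow> b \<in> carrier R \<Longrightarrow> x \<in> carrier M \<Longrightarrow>
    (a \<otimes>\<^bsub>R\<^esub> b) \<odot>\<^bsub>M\<^esub> x = a \<odot>\<^bsub>M\<^esub> (b \<odot>\<^bsub>M\<^esub> x)"
  using lmodule by (simp add: lmodule_def)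

lemma smult_one [simp]: "x \<in> carrier M \<Longrightarrow> \<one>\<^bsub>R\<^esub> \<odot>\<^bsub>M\<^esub> x = x"
  using lmodule by (simp add: lmodule_def)

lemma zero_smult [simp]: "x \<in> carrier M \<Longrightarrow> \<zero>\<^bsub>R\<^esub> \<odot>\<^bsub>M\<^esub> x = \<zero>\<^bsub>M\<^esub>"
  using smult_l_distr[of "\<zero>\<^bsub>R\<^esub>" "\<zero>\<^bsub>R\<^esub>" x] by (simp add: M.add.l_cancel_one')

lemma smult_zero [simp]: "a \<in> carrier R \<Longrightarrow> a \<odot>\<^bsub>M\<^esub> \<zero>\<^bsub>M\<^esub> = \<zero>\<^bsub>M\<^esub>"
  using smult_r_distr[of a "\<zero>\<^bsub>M\<^esub>" "\<zero>\<^bsub>M\<^esub>"] by (simp add: M.add.l_cancel_one')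

lemma minus_one_smult: "x \<in> carrier M \<Longrightarrow> (\<ominus>\<^bsub>R\<^esub> \<one>\<^bsub>R\<^esub>) \<odot>\<^bsub>M\<^esub> x = \<ominus>\<^bsub>M\<^esub> x"
  using smult_l_distr[of "\<one>\<^bsub>R\<^esub>" "\<ominus>\<^bsub>R\<^esub> \<one>\<^bsub>R\<^esub>" x]
  by (simp add: R.r_neg) (metis M.a_comm M.minus_equality R.a_inv_closed R.one_closed smult_closed)

lemma smult_finsum:
  assumes "a \<in> carrier R" "f \<in> A \<rightarrow> carrier M"
  shows "a \<odot>\<^bsub>M\<^esub> finsum M f A = finsum M (\<lambda>i. a \<odot>\<^bsub>M\<^esub> f i) A"
proof (cases "finite A")
  case True
  then show ?thesis
    using assms by (induction A rule: finite_induct) (auto simp: smult_r_distr Pi_iff)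
qed (simp add: assms M.finsum_infinite)

lemma lsubmodule_abelian_subgroup:
  assumes "lsubmodule R M H"
  shows "abelian_subgroup H M"
proof -
  have "subgroup H (add_monoid M)"
  proof (rule M.add.subgroupI)
    fix x assume "x \<in> H"
    then show "\<ominus>\<^bsub>M\<^esub> x \<in> H"
      using assms minus_one_smult[of x] by (force simp: lsubmodule_def)
  qed (use assms in \<open>auto simp: lsubmodule_def\<close>)
  then show ?thesis
    by (intro abelian_subgroupI3 additive_subgroup.intro M.abelian_group_axioms)
qed

lemma lsubmodule_finsum_closed:
  assumes "lsubmodule R M H" "f \<in> A \<rightarrow> H"
  shows "finsum M f A \<in> H"
proof (cases "finite A")
  case True
  have "H \<subseteq> carrier M" using assms(1) by (simp add: lsubmodule_def)
  with True assms show ?thesis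
    by (induction A rule: finite_induct) (auto simp: lsubmodule_def Pi_iff subset_iff)
qed (use assms in \<open>simp add: M.finsum_infinite lsubmodule_def\<close>)

lemma DspanI: "c \<in> G \<rightarrow> C \<Longrightarrow> finsum M (\<lambda>g. c g \<odot>\<^bsub>M\<^esub> g) G \<in> Dspan M C G"
  by (auto simp: Dspan_def)

lemma Dspan_subset_carrier: "G \<subseteq> carrier M \<Longrightarrow> C \<subseteq> carrier R \<Longrightarrow> Dspan M C G \<subseteq> carrier M"
  by (auto simp: Dspan_def Pi_iff subset_iff intro!: M.finsum_closed)

lemma Vset_subset_carrier:
  "F \<subseteq> carrier M \<Longrightarrow> \<forall>a\<in>Zn n. u a \<in> carrier R \<Longrightarrow> Vset M n u k F \<subseteq> carrier M"
  by (auto simp: Vset_def Zball_def)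

lemma Dspan_lsubmodule:
  assumes G: "G \<subseteq> carrier M"
  shows "lsubmodule R M (Dspan M (carrier R) G)"
  unfolding lsubmodule_def
proof (intro conjI ballI)
  show "Dspan M (carrier R) G \<subseteq> carrier M" using G by (simp add: Dspan_subset_carrier)
  have "finsum M (\<lambda>g. \<zero>\<^bsub>R\<^esub> \<odot>\<^bsub>M\<^esub> g) G = finsum M (\<lambda>g. \<zero>\<^bsub>M\<^esub>) G"
    using G by (intro M.finsum_cong') auto
  then show "\<zero>\<^bsub>M\<^esub> \<in> Dspan M (carrier R) G"
    using DspanI[of "\<lambda>_. \<zero>\<^bsub>R\<^esub>" G "carrier R"] by (simp add: M.finsum_zero)
next
  fix x y assume "x \<in> Dspan M (carrier R) G" "y \<in> Dspan M (carrier R) G"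
  then obtain c d where cd: "c \<in> G \<rightarrow> carrier R" "d \<in> G \<rightarrow> carrier R"
    and x: "x = finsum M (\<lambda>g. c g \<odot>\<^bsub>M\<^esub> g) G" and y: "y = finsum M (\<lambda>g. d g \<odot>\<^bsub>M\<^esub> g) G"
    unfolding Dspan_def by blast
  have "x \<oplus>\<^bsub>M\<^esub> y = finsum M (\<lambda>g. c g \<odot>\<^bsub>M\<^esub> g \<oplus>\<^bsub>M\<^esub> d g \<odot>\<^bsub>M\<^esub> g) G"
    using cd G unfolding x y by (intro M.finsum_addf[symmetric]) auto
  also have "\<dots> = finsum M (\<lambda>g. (c g \<oplus>\<^bsub>R\<^esub> d g) \<odot>\<^bsub>M\<^esub> g) G"
    using cd G by (intro M.finsum_cong') (auto simp: smult_l_distr Pi_iff subset_iff)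
  also have "\<dots> \<in> Dspan M (carrier R) G"
    using cd by (intro DspanI) auto
  finally show "x \<oplus>\<^bsub>M\<^esub> y \<in> Dspan M (carrier R) G" .
next
  fix a x assume a: "a \<in> carrier R" and "x \<in> Dspan M (carrier R) G"
  then obtain c where c: "c \<in> G \<rightarrow> carrier R" and x: "x = finsum M (\<lambda>g. c g \<odot>\<^bsub>M\<^esub> g) G"
    unfolding Dspan_def by blast
  have "a \<odot>\<^bsub>M\<^esub> x = finsum M (\<lambda>g. a \<odot>\<^bsub>M\<^esub> (c g \<odot>\<^bsub>M\<^esub> g)) G"
    using a c G unfolding x by (intro smult_finsum) auto
  also have "\<dots> = finsum M (\<lambda>g. (a \<otimes>\<^bsub>R\<^esub> c g) \<odot>\<^bsub>M\<^esub> g) G"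
    using a c G by (intro M.finsum_cong') (auto simp: smult_assoc Pi_iff subset_iff)
  also have "\<dots> \<in> Dspan M (carrier R) G"
    using a c by (intro DspanI) auto
  finally show "a \<odot>\<^bsub>M\<^esub> x \<in> Dspan M (carrier R) G" .
qed

lemma Dspan_superset:
  assumes "finite G" "G \<subseteq> carrier M"
  shows "G \<subseteq> Dspan M (carrier R) G"
proof
  fix g0 assume g0: "g0 \<in> G"
  let ?c = "\<lambda>g. if g0 = g then \<one>\<^bsub>R\<^esub> else \<zero>\<^bsub>R\<^esub>"
  have "finsum M (\<lambda>g. ?c g \<odot>\<^bsub>M\<^esub> g) G = finsum M (\<lambda>g. if g0 = g then g else \<zero>\<^bsub>M\<^esub>) G"
    using assms by (intro M.finsum_cong') auto
  also have "\<dots> = g0" using assms g0 by (subst M.finsum_singleton) auto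
  finally have "g0 = finsum M (\<lambda>g. ?c g \<odot>\<^bsub>M\<^esub> g) G" ..
  moreover have "finsum M (\<lambda>g. ?c g \<odot>\<^bsub>M\<^esub> g) G \<in> Dspan M (carrier R) G"
    by (intro DspanI) auto
  ultimately show "g0 \<in> Dspan M (carrier R) G" by simp
qed

end

locale left_module_hom = M: left_module R M + M': left_module R M'
  for R :: "('r,'b) ring_scheme" and M :: "('r,'m,'c) module_scheme"
    and M' :: "('r,'n,'d) module_scheme" +
  fixes h :: "'m \<Rightarrow> 'n"
  assumes hom_closed [simp]: "x \<in> carrier M \<Longrightarrow> h x \<in> carrier M'"
    and hom_add: "x \<in> carrier M \<Longrightarrow> y \<in> carrier M \<Longrightarrow> h (x \<oplus>\<^bsub>M\<^esub> y) = h x \<oplus>\<^bsub>M'\<^esub> h y"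
    and hom_smult: "a \<in> carrier R \<Longrightarrow> x \<in> carrier M \<Longrightarrow> h (a \<odot>\<^bsub>M\<^esub> x) = a \<odot>\<^bsub>M'\<^esub> h x"
begin

lemma hom_zero [simp]: "h \<zero>\<^bsub>M\<^esub> = \<zero>\<^bsub>M'\<^esub>"
  using hom_add[of "\<zero>\<^bsub>M\<^esub>" "\<zero>\<^bsub>M\<^esub>"] by simp

lemma hom_finsum: "f \<in> A \<rightarrow> carrier M \<Longrightarrow> h (finsum M f A) = finsum M' (\<lambda>i. h (f i)) A"
proof (induction A rule: infinite_finite_induct)
  case (insert a A)
  then show ?case
    by (simp add: Pi_iff M.M.finsum_insert M'.M.finsum_insert M.M.finsum_closed hom_add)
qed (simp_all add: M.M.finsum_infinite M'.M.finsum_infinite)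

lemma lfin_gen_image:
  assumes surj: "h ` carrier M = carrier M'" and fg: "lfin_gen R M"
  shows "lfin_gen R M'"
proof -
  obtain F where F: "finite F" "F \<subseteq> carrier M"
    and span: "carrier M = Dspan M (carrier R) F"
    using fg unfolding lfin_gen_def Dspan_def by blast
  have hF: "finite (h ` F)" "h ` F \<subseteq> carrier M'" using F by auto
  have submodule: "lsubmodule R M' (Dspan M' (carrier R) (h ` F))"
    using hF by (simp add: M'.Dspan_lsubmodule)
  have gen: "h ` F \<subseteq> Dspan M' (carrier R) (h ` F)"
    using hF by (rule M'.Dspan_superset)
  have "carrier M' \<subseteq> Dspan M' (carrier R) (h ` F)"
  proof
    fix y assume "y \<in> carrier M'"
    then obtain x where "x \<in> carrier M" and y: "y = h x" using surj by blast
    then obtain c where c: "c \<in> F \<rightarrow> carrier R" and x: "x = finsum M (\<lambda>f. c f \<odot>\<^bsub>M\<^esub> f) F"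
      using span unfolding Dspan_def by blast
    have "y = finsum M' (\<lambda>f. h (c f \<odot>\<^bsub>M\<^esub> f)) F"
      using c F by (simp add: y x hom_finsum Pi_iff subset_iff)
    also have "\<dots> = finsum M' (\<lambda>f. c f \<odot>\<^bsub>M'\<^esub> h f) F"
      using c F by (intro M'.M.finsum_cong') (auto simp: hom_smult Pi_iff subset_iff)
    also have "\<dots> \<in> Dspan M' (carrier R) (h ` F)"
      using c gen submodule
      by (intro M'.lsubmodule_finsum_closed) (auto simp: lsubmodule_def Pi_iff image_subset_iff)
    finally show "y \<in> Dspan M' (carrier R) (h ` F)" .
  qed
  then have "carrier M' = Dspan M' (carrier R) (h ` F)"
    using hF M'.Dspan_subset_carrier by blast
  with hF show ?thesis unfolding lfin_gen_def Dspan_def by blast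
qed

end

locale left_module_iso = left_module_hom +
  assumes hom_bij: "bij_betw h (carrier M) (carrier M')"
begin

lemma hom_inj: "inj_on h (carrier M)"
  using hom_bij by (rule bij_betw_imp_inj_on)

lemma hom_surj: "h ` carrier M = carrier M'"
  using hom_bij by (rule bij_betw_imp_surj_on)

lemma nontrivial_iso:
  assumes "carrier M \<noteq> {\<zero>\<^bsub>M\<^esub>}"
  shows "carrier M' \<noteq> {\<zero>\<^bsub>M'\<^esub>}"
proof -
  obtain x where x: "x \<in> carrier M" "x \<noteq> \<zero>\<^bsub>M\<^esub>" using assms M.M.zero_closed by blast
  then have "h x \<noteq> \<zero>\<^bsub>M'\<^esub>" using hom_inj hom_zero by (metis M.M.zero_closed inj_onD)
  with x show ?thesis using hom_closed by blast
qed

lemma lfin_gen_iso: "lfin_gen R M \<Longrightarrow> lfin_gen R M'"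
  using hom_surj by (rule lfin_gen_image)

lemma Dspan_iso:
  assumes G: "G \<subseteq> carrier M" and C: "C \<subseteq> carrier R"
  shows "Dspan M' C (h ` G) = h ` Dspan M C G"
proof -
  have injG: "inj_on h G" using hom_inj G by (rule inj_on_subset)
  have sum_eq: "finsum M' (\<lambda>g'. c g' \<odot>\<^bsub>M'\<^esub> g') (h ` G) = h (finsum M (\<lambda>g. c (h g) \<odot>\<^bsub>M\<^esub> g) G)"
    if c: "c \<in> h ` G \<rightarrow> C" for c
  proof -
    have "finsum M' (\<lambda>g'. c g' \<odot>\<^bsub>M'\<^esub> g') (h ` G) = finsum M' (\<lambda>g. c (h g) \<odot>\<^bsub>M'\<^esub> h g) G"
      using c C G injG by (intro M'.M.finsum_reindex) (auto simp: Pi_iff subset_iff)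
    also have "\<dots> = finsum M' (\<lambda>g. h (c (h g) \<odot>\<^bsub>M\<^esub> g)) G"
      using c C G by (intro M'.M.finsum_cong') (auto simp: hom_smult Pi_iff subset_iff)
    also have "\<dots> = h (finsum M (\<lambda>g. c (h g) \<odot>\<^bsub>M\<^esub> g) G)"
      using c C G by (intro hom_finsum[symmetric]) (auto simp: Pi_iff subset_iff)
    finally show ?thesis .
  qed
  show ?thesis
  proof
    show "Dspan M' C (h ` G) \<subseteq> h ` Dspan M C G"
    proof
      fix y assume "y \<in> Dspan M' C (h ` G)"
      then obtain c where c: "c \<in> h ` G \<rightarrow> C" and y: "y = finsum M' (\<lambda>g'. c g' \<odot>\<^bsub>M'\<^esub> g') (h ` G)"
        unfolding Dspan_def by blast
      have "finsum M (\<lambda>g. c (h g) \<odot>\<^bsub>M\<^esub> g) G \<in> Dspan M C G"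
        using c by (intro M.DspanI) auto
      then show "y \<in> h ` Dspan M C G" using y sum_eq[OF c] by blast
    qed
    show "h ` Dspan M C G \<subseteq> Dspan M' C (h ` G)"
    proof
      fix y assume "y \<in> h ` Dspan M C G"
      then obtain d where d: "d \<in> G \<rightarrow> C" and y: "y = h (finsum M (\<lambda>g. d g \<odot>\<^bsub>M\<^esub> g) G)"
        unfolding Dspan_def by blast
      define c where "c = d \<circ> inv_into G h"
      have c: "c \<in> h ` G \<rightarrow> C" using d by (auto simp: c_def inv_into_into)
      have "finsum M (\<lambda>g. c (h g) \<odot>\<^bsub>M\<^esub> g) G = finsum M (\<lambda>g. d g \<odot>\<^bsub>M\<^esub> g) G"
        using d C G injG by (intro M.M.finsum_cong') (auto simp: c_def Pi_iff subset_iff)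
      then have "y = finsum M' (\<lambda>g'. c g' \<odot>\<^bsub>M'\<^esub> g') (h ` G)" using y sum_eq[OF c] by simp
      also have "\<dots> \<in> Dspan M' C (h ` G)" using c by (rule M'.DspanI)
      finally show "y \<in> Dspan M' C (h ` G)" .
    qed
  qed
qed

lemma Ddim_iso:
  assumes S: "S \<subseteq> carrier M" and C: "C \<subseteq> carrier R"
  shows "Ddim M' C (h ` S) = Ddim M C S"
proof -
  have spans_iff: "h ` S \<subseteq> Dspan M' C (h ` G) \<longleftrightarrow> S \<subseteq> Dspan M C G" if G: "G \<subseteq> S" for G
  proof -
    have "Dspan M C G \<subseteq> carrier M" using G S C by (intro M.Dspan_subset_carrier) auto
    then have "S \<subseteq> Dspan M C G \<longleftrightarrow> (\<forall>s\<in>S. h s \<in> h ` Dspan M C G)"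
      using S inj_on_image_mem_iff[OF hom_inj] by blast
    then show ?thesis
      using G S C by (simp add: Dspan_iso image_subset_iff)
  qed
  have "(\<exists>G'. finite G' \<and> G' \<subseteq> h ` S \<and> card G' = k \<and> h ` S \<subseteq> Dspan M' C G')
      \<longleftrightarrow> (\<exists>G. finite G \<and> G \<subseteq> S \<and> card G = k \<and> S \<subseteq> Dspan M C G)" for k
  proof
    assume "\<exists>G'. finite G' \<and> G' \<subseteq> h ` S \<and> card G' = k \<and> h ` S \<subseteq> Dspan M' C G'"
    then obtain G where "finite (h ` G)" "G \<subseteq> S" "card (h ` G) = k" "h ` S \<subseteq> Dspan M' C (h ` G)"
      by (auto simp: subset_image_iff)
    moreover have "inj_on h G" using hom_inj \<open>G \<subseteq> S\<close> S by (auto intro: inj_on_subset)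
    ultimately show "\<exists>G. finite G \<and> G \<subseteq> S \<and> card G = k \<and> S \<subseteq> Dspan M C G"
      using spans_iff by (auto simp: finite_image_iff card_image)
  next
    assume "\<exists>G. finite G \<and> G \<subseteq> S \<and> card G = k \<and> S \<subseteq> Dspan M C G"
    then obtain G where G: "finite G" "G \<subseteq> S" "card G = k" "S \<subseteq> Dspan M C G" by blast
    moreover have "inj_on h G" using hom_inj G(2) S by (auto intro: inj_on_subset)
    ultimately show "\<exists>G'. finite G' \<and> G' \<subseteq> h ` S \<and> card G' = k \<and> h ` S \<subseteq> Dspan M' C G'"
      using spans_iff by (intro exI[of _ "h ` G"]) (auto simp: card_image)
  qed
  then show ?thesis unfolding Ddim_def by simp
qed

lemma Vset_iso:
  assumes "F \<subseteq> carrier M" and "\<forall>a\<in>Zn n. u a \<in> carrier R"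
  shows "Vset M' n u k (h ` F) = h ` Vset M n u k F"
proof -
  have smult: "u a \<odot>\<^bsub>M'\<^esub> h f = h (u a \<odot>\<^bsub>M\<^esub> f)" if "a \<in> Zball n k" "f \<in> F" for a f
    using that assms by (auto simp: Zball_def hom_smult)
  show ?thesis
  proof (intro equalityI subsetI)
    fix v assume "v \<in> Vset M' n u k (h ` F)"
    then obtain a f where "a \<in> Zball n k" "f \<in> F" "v = u a \<odot>\<^bsub>M'\<^esub> h f"
      unfolding Vset_def by blast
    then show "v \<in> h ` Vset M n u k F"
      by (intro image_eqI[of _ _ "u a \<odot>\<^bsub>M\<^esub> f"]) (auto simp: smult Vset_def)
  next
    fix v assume "v \<in> h ` Vset M n u k F"
    then obtain a f where "a \<in> Zball n k" "f \<in> F" "v = h (u a \<odot>\<^bsub>M\<^esub> f)"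
      unfolding Vset_def by blast
    then show "v \<in> Vset M' n u k (h ` F)"
      by (auto simp: smult[symmetric] Vset_def)
  qed
qed

lemma gk_iso:
  assumes C: "C \<subseteq> carrier R" and u: "\<forall>a\<in>Zn n. u a \<in> carrier R"
  shows "gk C n u M' = gk C n u M"
proof -
  define I where "I = {F. finite F \<and> F \<noteq> {} \<and> F \<subseteq> carrier M - {\<zero>\<^bsub>M\<^esub>}}"
  have nonzero: "carrier M' - {\<zero>\<^bsub>M'\<^esub>} = h ` (carrier M - {\<zero>\<^bsub>M\<^esub>})"
    using hom_surj hom_inj by (simp add: inj_on_image_set_diff[of h "carrier M"])
  have "{F. finite F \<and> F \<noteq> {} \<and> F \<subseteq> carrier M' - {\<zero>\<^bsub>M'\<^esub>}} = image h ` I"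
  proof (intro equalityI subsetI)
    fix F' assume "F' \<in> {F. finite F \<and> F \<noteq> {} \<and> F \<subseteq> carrier M' - {\<zero>\<^bsub>M'\<^esub>}}"
    then have F': "finite F'" "F' \<noteq> {}" "F' \<subseteq> h ` (carrier M - {\<zero>\<^bsub>M\<^esub>})"
      unfolding nonzero by auto
    then obtain F where "F \<subseteq> carrier M - {\<zero>\<^bsub>M\<^esub>}" "finite F" "F' = h ` F"
      using finite_subset_image by metis
    with F' show "F' \<in> image h ` I" unfolding I_def by auto
  qed (auto simp: I_def nonzero)
  moreover have "Ddim M' C (Vset M' n u k (h ` F)) = Ddim M C (Vset M n u k F)" if "F \<in> I" for F k
  proof -
    have "F \<subseteq> carrier M" using that by (auto simp: I_def)
    then show ?thesis using C u by (simp add: Vset_iso Ddim_iso M.Vset_subset_carrier)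
  qed
  ultimately show ?thesis unfolding gk_def I_def by (simp add: image_comp)
qed

end

locale left_submodule = left_module +
  fixes H assumes submodule: "lsubmodule R M H"
begin

sublocale H: abelian_subgroup H M
  using submodule by (rule lsubmodule_abelian_subgroup)

lemma quotient_carrier: "carrier (qmod M H) = (\<lambda>x. H +>\<^bsub>M\<^esub> x) ` carrier M"
  by (auto simp: qmod_def A_RCOSETS_def')

lemma quotient_zero: "\<zero>\<^bsub>qmod M H\<^esub> = H"
  by (simp add: qmod_def)

lemma quotient_add [simp]:
  "x \<in> carrier M \<Longrightarrow> y \<in> carrier M \<Longrightarrow>
    (H +>\<^bsub>M\<^esub> x) \<oplus>\<^bsub>qmod M H\<^esub> (H +>\<^bsub>M\<^esub> y) = H +>\<^bsub>M\<^esub> (x \<oplus>\<^bsub>M\<^esub> y)"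
  by (simp add: qmod_def H.a_rcos_sum)

lemma quotient_smult [simp]:
  assumes a: "a \<in> carrier R" and x: "x \<in> carrier M"
  shows "a \<odot>\<^bsub>qmod M H\<^esub> (H +>\<^bsub>M\<^esub> x) = H +>\<^bsub>M\<^esub> (a \<odot>\<^bsub>M\<^esub> x)"
proof -
  let ?S = "(\<lambda>y. a \<odot>\<^bsub>M\<^esub> y) ` (H +>\<^bsub>M\<^esub> x)"
  have "?S \<subseteq> H +>\<^bsub>M\<^esub> (a \<odot>\<^bsub>M\<^esub> x)"
  proof
    fix z assume "z \<in> ?S"
    then obtain h where h: "h \<in> H" and z: "z = a \<odot>\<^bsub>M\<^esub> (h \<oplus>\<^bsub>M\<^esub> x)"
      unfolding a_r_coset_def' by blast
    have "z = a \<odot>\<^bsub>M\<^esub> h \<oplus>\<^bsub>M\<^esub> a \<odot>\<^bsub>M\<^esub> x"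
      using a x h by (simp add: z smult_r_distr)
    moreover have "a \<odot>\<^bsub>M\<^esub> h \<in> H" using submodule a h by (simp add: lsubmodule_def)
    ultimately show "z \<in> H +>\<^bsub>M\<^esub> (a \<odot>\<^bsub>M\<^esub> x)" unfolding a_r_coset_def' by blast
  qed
  then have "H <+>\<^bsub>M\<^esub> ?S \<subseteq> H <+>\<^bsub>M\<^esub> (H +>\<^bsub>M\<^esub> (a \<odot>\<^bsub>M\<^esub> x))"
    unfolding set_add_def by (intro mono_set_mult) auto
  also have "\<dots> = H +>\<^bsub>M\<^esub> (a \<odot>\<^bsub>M\<^esub> x)"
    using a x by (intro H.rcosets_add_eq M.a_rcosetsI) auto
  finally have "H <+>\<^bsub>M\<^esub> ?S \<subseteq> H +>\<^bsub>M\<^esub> (a \<odot>\<^bsub>M\<^esub> x)" .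
  moreover have "a \<odot>\<^bsub>M\<^esub> x \<in> ?S" using x H.a_rcos_self by blast
  then have "H +>\<^bsub>M\<^esub> (a \<odot>\<^bsub>M\<^esub> x) \<subseteq> H <+>\<^bsub>M\<^esub> ?S"
    unfolding set_add_def' a_r_coset_def' by blast
  ultimately show ?thesis by (simp add: qmod_def)
qed

lemma quotient_abelian_group: "abelian_group (qmod M H)"
proof -
  interpret F: comm_group "M A_Mod H" by (rule H.a_factorgroup_is_comm_group)
  show ?thesis
  proof (rule abelian_groupI)
    fix X Y assume "X \<in> carrier (qmod M H)" "Y \<in> carrier (qmod M H)"
    then show "X \<oplus>\<^bsub>qmod M H\<^esub> Y \<in> carrier (qmod M H)"
      and "X \<oplus>\<^bsub>qmod M H\<^esub> Y = Y \<oplus>\<^bsub>qmod M H\<^esub> X"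
      using F.m_comm[of X Y] by (auto simp: qmod_def A_FactGroup_def' H.a_setmult_closed)
  next
    show "\<zero>\<^bsub>qmod M H\<^esub> \<in> carrier (qmod M H)"
      by (simp add: qmod_def H.a_subgroup_in_rcosets)
  next
    fix X Y Z assume "X \<in> carrier (qmod M H)" "Y \<in> carrier (qmod M H)" "Z \<in> carrier (qmod M H)"
    then show "X \<oplus>\<^bsub>qmod M H\<^esub> Y \<oplus>\<^bsub>qmod M H\<^esub> Z = X \<oplus>\<^bsub>qmod M H\<^esub> (Y \<oplus>\<^bsub>qmod M H\<^esub> Z)"
      by (simp add: qmod_def H.a_rcosets_assoc)
  next
    fix X assume "X \<in> carrier (qmod M H)"
    then show "\<zero>\<^bsub>qmod M H\<^esub> \<oplus>\<^bsub>qmod M H\<^esub> X = X"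
      and "\<exists>Y\<in>carrier (qmod M H). Y \<oplus>\<^bsub>qmod M H\<^esub> X = \<zero>\<^bsub>qmod M H\<^esub>"
      by (auto simp: qmod_def H.rcosets_add_eq intro!: bexI[of _ "a_set_inv\<^bsub>M\<^esub> X"]
          H.a_rcosets_inv_mult_group_eq H.a_setinv_closed)
  qed
qed

lemma quotient_lmodule: "lmodule R (qmod M H)"
  unfolding lmodule_def
proof (intro conjI ballI R.ring_axioms quotient_abelian_group)
  fix a X assume "a \<in> carrier R" "X \<in> carrier (qmod M H)"
  then show "a \<odot>\<^bsub>qmod M H\<^esub> X \<in> carrier (qmod M H)"
    by (auto simp: quotient_carrier)
next
  fix a b X assume "a \<in> carrier R" "b \<in> carrier R" "X \<in> carrier (qmod M H)"
  then show "(a \<oplus>\<^bsub>R\<^esub> b) \<odot>\<^bsub>qmod M H\<^esub> X = a \<odot>\<^bsub>qmod M H\<^esub> X \<oplus>\<^bsub>qmod M H\<^esub> b \<odot>\<^bsub>qmod M H\<^esub> X"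
    and "(a \<otimes>\<^bsub>R\<^esub> b) \<odot>\<^bsub>qmod M H\<^esub> X = a \<odot>\<^bsub>qmod M H\<^esub> (b \<odot>\<^bsub>qmod M H\<^esub> X)"
    by (auto simp: quotient_carrier smult_l_distr smult_assoc)
next
  fix a X Y assume "a \<in> carrier R" "X \<in> carrier (qmod M H)" "Y \<in> carrier (qmod M H)"
  then show "a \<odot>\<^bsub>qmod M H\<^esub> (X \<oplus>\<^bsub>qmod M H\<^esub> Y) = a \<odot>\<^bsub>qmod M H\<^esub> X \<oplus>\<^bsub>qmod M H\<^esub> a \<odot>\<^bsub>qmod M H\<^esub> Y"
    by (auto simp: quotient_carrier smult_r_distr)
next
  fix X assume "X \<in> carrier (qmod M H)"
  then show "\<one>\<^bsub>R\<^esub> \<odot>\<^bsub>qmod M H\<^esub> X = X"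
    by (auto simp: quotient_carrier)
qed

sublocale quotient: left_module_hom R M "qmod M H" "\<lambda>x. H +>\<^bsub>M\<^esub> x"
  by unfold_locales (auto simp: quotient_lmodule quotient_carrier lmodule)

lemma quotient_nontrivial:
  assumes "H \<noteq> carrier M"
  shows "carrier (qmod M H) \<noteq> {\<zero>\<^bsub>qmod M H\<^esub>}"
proof -
  obtain x where x: "x \<in> carrier M" "x \<notin> H" using assms H.a_subset by blast
  then have "H +>\<^bsub>M\<^esub> x \<noteq> H" using H.a_rcos_self by blast
  with x show ?thesis by (auto simp: quotient_carrier quotient_zero)
qed

end

(* The copy of Q along an injection \<phi>. *)
definition transport_module :: "('r,'a,'c) module_scheme \<Rightarrow> ('a \<Rightarrow> 'x) \<Rightarrow> ('r,'x) module" where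
  "transport_module Q \<phi> = \<lparr>carrier = \<phi> ` carrier Q, mult = (\<lambda>x y. undefined), one = undefined,
     zero = \<phi> \<zero>\<^bsub>Q\<^esub>,
     add = (\<lambda>x y. \<phi> (inv_into (carrier Q) \<phi> x \<oplus>\<^bsub>Q\<^esub> inv_into (carrier Q) \<phi> y)),
     smult = (\<lambda>a x. \<phi> (a \<odot>\<^bsub>Q\<^esub> inv_into (carrier Q) \<phi> x))\<rparr>"

context left_module
begin

lemma lfin_gen_inj_list:
  assumes "lfin_gen R M"
  obtains \<phi> :: "'m \<Rightarrow> 'r list" where "inj_on \<phi> (carrier M)"
proof -
  obtain F where F: "finite F" "F \<subseteq> carrier M" and span: "carrier M = Dspan M (carrier R) F"
    using assms unfolding lfin_gen_def Dspan_def by blast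
  obtain fs where fs: "set fs = F" using finite_list F(1) by blast
  define coeffs where
    "coeffs x = (SOME c. c \<in> F \<rightarrow> carrier R \<and> x = finsum M (\<lambda>f. c f \<odot>\<^bsub>M\<^esub> f) F)" for x
  have coeffs: "coeffs x \<in> F \<rightarrow> carrier R \<and> x = finsum M (\<lambda>f. coeffs x f \<odot>\<^bsub>M\<^esub> f) F"
    if "x \<in> carrier M" for x
  proof -
    have "\<exists>c. c \<in> F \<rightarrow> carrier R \<and> x = finsum M (\<lambda>f. c f \<odot>\<^bsub>M\<^esub> f) F"
      using that span by (auto simp: Dspan_def)
    then show ?thesis unfolding coeffs_def by (rule someI_ex)
  qed
  have "inj_on (\<lambda>x. map (coeffs x) fs) (carrier M)"
  proof (rule inj_onI)
    fix x y assume x: "x \<in> carrier M" and y: "y \<in> carrier M"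
      and "map (coeffs x) fs = map (coeffs y) fs"
    then have "\<forall>f\<in>F. coeffs x f = coeffs y f" using fs by (simp add: map_eq_conv)
    then have "finsum M (\<lambda>f. coeffs x f \<odot>\<^bsub>M\<^esub> f) F = finsum M (\<lambda>f. coeffs y f \<odot>\<^bsub>M\<^esub> f) F"
      using coeffs[OF y] F by (intro M.finsum_cong') (auto simp: Pi_iff subset_iff)
    then show "x = y" using coeffs[OF x] coeffs[OF y] by metis
  qed
  then show ?thesis using that by blast
qed

lemma transport_module_iso:
  assumes inj: "inj_on \<phi> (carrier M)"
  shows "left_module_iso R M (transport_module M \<phi>) \<phi>"
proof -
  let ?T = "transport_module M \<phi>"
  have carrier: "carrier ?T = \<phi> ` carrier M" and zero: "\<zero>\<^bsub>?T\<^esub> = \<phi> \<zero>\<^bsub>M\<^esub>"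
    by (simp_all add: transport_module_def)
  have add: "\<phi> x \<oplus>\<^bsub>?T\<^esub> \<phi> y = \<phi> (x \<oplus>\<^bsub>M\<^esub> y)" if "x \<in> carrier M" "y \<in> carrier M" for x y
    using that inj by (simp add: transport_module_def)
  have smult: "a \<odot>\<^bsub>?T\<^esub> \<phi> x = \<phi> (a \<odot>\<^bsub>M\<^esub> x)" if "x \<in> carrier M" for a x
    using that inj by (simp add: transport_module_def)
  have "abelian_group ?T"
  proof (rule abelian_groupI)
    fix X assume "X \<in> carrier ?T"
    then obtain x where x: "x \<in> carrier M" "X = \<phi> x" by (auto simp: carrier)
    then have "\<phi> (\<ominus>\<^bsub>M\<^esub> x) \<oplus>\<^bsub>?T\<^esub> X = \<zero>\<^bsub>?T\<^esub>" by (simp add: add zero M.l_neg)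
    with x show "\<exists>Y\<in>carrier ?T. Y \<oplus>\<^bsub>?T\<^esub> X = \<zero>\<^bsub>?T\<^esub>" by (auto simp: carrier)
  qed (auto simp: carrier zero add M.a_ac)
  then have "lmodule R ?T"
    unfolding lmodule_def
    by (auto simp: carrier add smult R.ring_axioms smult_l_distr smult_r_distr smult_assoc)
  then show ?thesis
    using inj by unfold_locales (auto simp: lmodule carrier add smult bij_betw_def)
qed

lemma lfin_gen_iso_list_module:
  assumes "lfin_gen R M"
  obtains L :: "('r, 'r list) module" and h where "left_module_iso R M L h"
  using lfin_gen_inj_list[OF assms] transport_module_iso by blast

end

theorem proposition3p8:
  fixes R :: "'r ring" and D :: "'r set" and n :: nat and u :: "(nat \<Rightarrow> int) \<Rightarrow> 'r"
    and N :: "('r, 'm) module"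
  assumes "crossed_product R D n u"
    and "lmodule R N" and "lfin_gen R N" and "lcritical R D n u N"
    and "\<forall>L :: ('r, 'r list) module. lmodule R L \<and> lfin_gen R L \<and> carrier L \<noteq> {\<zero>\<^bsub>L\<^esub>}
           \<longrightarrow> gk D n u N \<le> gk D n u L"
  shows "lsimple R N"
proof -
  note cp = assms(1) and fg = assms(3) and critical = assms(4) and minimal = assms(5)
  interpret N: left_module R N by (rule left_module.intro) fact
  have D: "D \<subseteq> carrier R"
    using cp by (auto simp: crossed_product_def division_subring_def dest: subringE(1))
  have u: "\<forall>a\<in>Zn n. u a \<in> carrier R" using cp by (simp add: crossed_product_def)
  have "H = {\<zero>\<^bsub>N\<^esub>} \<or> H = carrier N" if H: "lsubmodule R N H" for H
  proof (rule ccontr)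
    assume "\<not> (H = {\<zero>\<^bsub>N\<^esub>} \<or> H = carrier N)"
    then have proper: "H \<noteq> {\<zero>\<^bsub>N\<^esub>}" "H \<noteq> carrier N" by auto
    interpret left_submodule R N H by unfold_locales (fact H)
    have "gk D n u (qmod N H) < gk D n u N" using critical H proper by (simp add: lcritical_def)
    moreover have fg_quotient: "lfin_gen R (qmod N H)"
      using fg quotient_carrier by (intro quotient.lfin_gen_image) auto
    obtain L :: "('r, 'r list) module" and h where "left_module_iso R (qmod N H) L h"
      using quotient.M'.lfin_gen_iso_list_module[OF fg_quotient] .
    then interpret L: left_module_iso R "qmod N H" L h .
    have "gk D n u N \<le> gk D n u L"
      using minimal L.M'.lmodule L.lfin_gen_iso[OF fg_quotient]
        L.nontrivial_iso[OF quotient_nontrivial[OF proper(2)]] by blast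
    moreover have "gk D n u L = gk D n u (qmod N H)" using D u by (rule L.gk_iso)
    ultimately show False by simp
  qed
  then show ?thesis using critical by (simp add: lsimple_def lcritical_def)
qed

end
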